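(* Let $w$ be an nTL-monomial for $P_n$ with decreasing runs $R_1,\dots,R_k$ (in order of appearance), where $R_i$ has peak $p_i$ and length $r_i$, and let $v_i=p_i-r_i+1$ be the valley of $R_i$. Then $v_1<v_2<\cdots<v_k$.
   Context: Fix $n\ge 0$. The nil-Temperley-Lieb algebra $A_n$ of the path graph $P_n$ is the unital associative algebra generated by $x_1,\dots,x_n$ subject to the relations $x_i^2=0$; $x_ix_j=x_jx_i$ if $|i-j|>1$; $x_ix_{i+1}x_i=0$ and $x_{i+1}x_ix_{i+1}=0$ for $1\le i<n$. A word is a finite product $x_{i_1}\cdots x_{i_m}$ of generators. Two words are equivalent if one can be obtained from the other by repeatedly swapping adjacent letters $x_ix_j\to x_jx_i$ with $|i-j|>1$. A word is reducible if it equals $0$ in $A_n$. Words of the same length are compared lexicographically by index sequences. An nTL-monomial is a word that is not reducible and lexicographically smallest among all words equivalent to it. A decreasing run is a maximal block of consecutive letters with strictly decreasing indices; the index of its first letter is its peak, the index of its last letter is its valley. (In an nTL-monomial indices in a run decrease by exactly one, so valley $=$ peak $-$ length $+1$.) *)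

theory Defs
  imports Main
begin

text \<open>Words in the generators x_1..x_n of the nil-Temperley-Lieb algebra A_n of
the path graph P_n are represented by their index sequences (nat lists).\<close>

definition is_word :: "nat \<Rightarrow> nat list \<Rightarrow> bool" where
  "is_word n w \<longleftrightarrow> (\<forall>i\<in>set w. 1 \<le> i \<and> i \<le> n)"

definition comm_step :: "nat list \<Rightarrow> nat list \<Rightarrow> bool" where
  "comm_step u v \<longleftrightarrow> (\<exists>a b i j. u = a @ [i, j] @ b \<and> v = a @ [j, i] @ b
      \<and> (i + 1 < j \<or> j + 1 < i))"

definition word_equiv :: "nat list \<Rightarrow> nat list \<Rightarrow> bool" where
  "word_equiv u v \<longleftrightarrow> comm_step\<^sup>*\<^sup>* u v"

definition has_relator :: "nat list \<Rightarrow> bool" where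
  "has_relator u \<longleftrightarrow> (\<exists>a b i. u = a @ [i, i] @ b \<or> u = a @ [i, Suc i, i] @ b
      \<or> u = a @ [Suc i, i, Suc i] @ b)"

text \<open>Reducible: equal to 0 in A_n. Since all defining relations of A_n are
commutations or monomials set to zero, A_n is the contracted semigroup algebra of the
corresponding monoid with zero, and a word is 0 iff it is commutation-equivalent
to a word containing a relator.\<close>
definition reducible :: "nat list \<Rightarrow> bool" where
  "reducible w \<longleftrightarrow> (\<exists>u. word_equiv w u \<and> has_relator u)"

definition ntl_monomial :: "nat \<Rightarrow> nat list \<Rightarrow> bool" where
  "ntl_monomial n w \<longleftrightarrow> is_word n w \<and> \<not> reducible w
      \<and> (\<forall>u. word_equiv w u \<longrightarrow> lexordp_eq w u)"

definition run_decomp :: "nat list \<Rightarrow> nat list list \<Rightarrow> bool" where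
  "run_decomp w R \<longleftrightarrow> concat R = w \<and> (\<forall>r\<in>set R. r \<noteq> [] \<and> sorted_wrt (>) r)
      \<and> (\<forall>i. Suc i < length R \<longrightarrow> last (R ! i) \<le> hd (R ! Suc i))"

end

theory Submission
  imports Defs
begin

(* Lexicographic minimality forbids a factor x_i x_j with i > j + 1, since swapping it
   gives an equivalent smaller word; hence every decreasing run of an nTL-monomial
   descends by exactly one and its valley is its last letter. If two consecutive runs
   had valleys v >= v', then the valley v of the first run lies between the valley and
   the peak of the second run, so x_v commutes to the right through the second run
   until it meets x_v or x_(v+1) x_v, producing a relator x_v x_v or x_v x_(v+1) x_v:
   the word would be reducible. *)

fun descends_by_one :: "nat list \<Rightarrow> bool" where
  "descends_by_one (x # y # r) \<longleftrightarrow> x = Suc y \<and> descends_by_one (y # r)"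
| "descends_by_one _ \<longleftrightarrow> True"

lemma descends_by_one_hd_last:
  "descends_by_one r \<Longrightarrow> r \<noteq> [] \<Longrightarrow> hd r + 1 = last r + length r"
  by (induction r rule: descends_by_one.induct) auto

lemma lexordp_eq_append_left_iff:
  "lexordp_eq (a @ xs) (a @ ys) \<longleftrightarrow> lexordp_eq xs (ys :: 'a :: order list)"
  by (induction a) simp_all

lemma word_equiv_swap:
  "i + 1 < j \<or> j + 1 < i \<Longrightarrow> word_equiv (a @ [i, j] @ b) (a @ [j, i] @ b)"
  unfolding word_equiv_def comm_step_def by blast

lemma reducible_if_has_relator: "has_relator u \<Longrightarrow> reducible u"
  unfolding reducible_def word_equiv_def by blast

lemma reducible_word_equiv:
  "word_equiv u v \<Longrightarrow> reducible v \<Longrightarrow> reducible u"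
  unfolding reducible_def word_equiv_def by (meson rtranclp_trans)

lemma ntl_monomial_descent_le_Suc:
  assumes "ntl_monomial n (a @ [x, y] @ b)"
  shows "x \<le> Suc y"
proof (rule ccontr)
  assume "\<not> x \<le> Suc y"
  then have "word_equiv (a @ [x, y] @ b) (a @ [y, x] @ b)"
    by (intro word_equiv_swap) simp
  then have "lexordp_eq (a @ [x, y] @ b) (a @ [y, x] @ b)"
    using assms unfolding ntl_monomial_def by blast
  with \<open>\<not> x \<le> Suc y\<close> show False
    by (simp add: lexordp_eq_append_left_iff)
qed

lemma ntl_monomial_decreasing_factor_descends_by_one:
  assumes "ntl_monomial n (a @ r @ b)" and "sorted_wrt (>) r"
  shows "descends_by_one r"
  using assms
proof (induction r arbitrary: a rule: descends_by_one.induct)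
  case (1 x y r)
  have "x \<le> Suc y"
    using "1.prems"(1) ntl_monomial_descent_le_Suc[of n a x y "r @ b"] by simp
  moreover have "descends_by_one (y # r)"
    using "1.IH"[of "a @ [x]"] "1.prems" by simp
  ultimately show ?case
    using "1.prems"(2) by simp
qed simp_all

lemma reducible_letter_before_run:
  assumes "descends_by_one r" and "r \<noteq> []" and "last r \<le> v" and "v \<le> hd r"
  shows "reducible (a @ v # r @ b)"
  using assms
proof (induction r arbitrary: a)
  case Nil
  then show ?case by simp
next
  case (Cons x r)
  consider "v = x" | "x = Suc v" | "v + 1 < x"
    using Cons.prems(4) by fastforce
  then show ?case
  proof cases
    case 1
    then have "a @ v # (x # r) @ b = a @ [v, v] @ (r @ b)" by simp
    then have "has_relator (a @ v # (x # r) @ b)"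
      unfolding has_relator_def by blast
    then show ?thesis
      by (rule reducible_if_has_relator)
  next
    case 2
    with Cons.prems obtain r' where "r = v # r'"
      by (cases r) auto
    with 2 have "a @ v # (x # r) @ b = a @ [v, Suc v, v] @ (r' @ b)" by simp
    then have "has_relator (a @ v # (x # r) @ b)"
      unfolding has_relator_def by blast
    then show ?thesis
      by (rule reducible_if_has_relator)
  next
    case 3
    with Cons.prems have "r \<noteq> []" by auto
    with Cons.prems 3 have "descends_by_one r" "last r \<le> v" "v \<le> hd r"
      by (cases r; simp)+
    then have "reducible ((a @ [x]) @ v # r @ b)"
      using Cons.IH \<open>r \<noteq> []\<close> by blast
    moreover have "word_equiv (a @ v # (x # r) @ b) (a @ [x, v] @ (r @ b))"
      using word_equiv_swap[of v x a "r @ b"] 3 by simp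
    ultimately show ?thesis
      by (simp add: reducible_word_equiv)
  qed
qed

lemma ntl_monomial_consecutive_runs_last_less:
  assumes "ntl_monomial n (a @ r @ s @ b)"
    and "r \<noteq> []" and "s \<noteq> []" and "descends_by_one s" and "last r \<le> hd s"
  shows "last r < last s"
proof (rule ccontr)
  assume "\<not> last r < last s"
  then have "reducible (a @ butlast r @ last r # s @ b)"
    using assms(3-5) reducible_letter_before_run[of s "last r" "a @ butlast r" b]
    by simp
  moreover have "a @ butlast r @ last r # s @ b = a @ r @ s @ b"
    using \<open>r \<noteq> []\<close> by (metis append.assoc append_Cons append_Nil append_butlast_last_id)
  ultimately show False
    using assms(1) unfolding ntl_monomial_def by simp
qed

lemma concat_split_at_Suc:
  "Suc i < length xs \<Longrightarrow>
    concat xs = concat (take i xs) @ xs ! i @ xs ! Suc i @ concat (drop (Suc (Suc i)) xs)"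
  by (metis Cons_nth_drop_Suc Suc_lessD append_take_drop_id concat.simps(2)
      concat_append append.assoc)

lemma run_decomp_descends_by_one:
  assumes "ntl_monomial n w" and "run_decomp w R" and "r \<in> set R"
  shows "descends_by_one r"
proof -
  obtain xs ys where "R = xs @ r # ys"
    using split_list[OF assms(3)] by blast
  then have "ntl_monomial n (concat xs @ r @ concat ys)"
    using assms(1,2) unfolding run_decomp_def by simp
  moreover have "sorted_wrt (>) r"
    using assms(2,3) unfolding run_decomp_def by blast
  ultimately show ?thesis
    by (rule ntl_monomial_decreasing_factor_descends_by_one)
qed

theorem lemma4:
  fixes n :: nat and w :: "nat list" and R :: "nat list list"
  assumes "ntl_monomial n w"
    and "run_decomp w R"
  shows "sorted_wrt (<) (map (\<lambda>r. int (hd r) - int (length r) + 1) R)"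
proof -
  have w: "concat R = w" and runs: "\<And>r. r \<in> set R \<Longrightarrow> r \<noteq> [] \<and> sorted_wrt (>) r"
    and linked: "\<And>i. Suc i < length R \<Longrightarrow> last (R ! i) \<le> hd (R ! Suc i)"
    using assms(2) unfolding run_decomp_def by auto
  have descends: "\<And>r. r \<in> set R \<Longrightarrow> descends_by_one r"
    using assms by (rule run_decomp_descends_by_one)
  have valleys: "map (\<lambda>r. int (hd r) - int (length r) + 1) R = map (\<lambda>r. int (last r)) R"
  proof (rule map_cong)
    fix r assume "r \<in> set R"
    then have "hd r + 1 = last r + length r"
      using descends runs descends_by_one_hd_last by blast
    then show "int (hd r) - int (length r) + 1 = int (last r)" by linarith
  qed simp
  have "last (R ! i) < last (R ! Suc i)" if "Suc i < length R" for i
    using ntl_monomial_consecutive_runs_last_less[of n] assms(1) w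
      concat_split_at_Suc[OF that] runs descends linked[OF that] that
    by (metis Suc_lessD nth_mem)
  then have "sorted_wrt (<) (map (\<lambda>r. int (last r)) R)"
    by (simp add: sorted_wrt_iff_nth_Suc_transp)
  then show ?thesis
    unfolding valleys .
qed

end
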